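(* Let $\mathbb{K}\in\{\mathbb{R},\mathbb{C}\}$ and let $\{T_j\}_{j=1}^n\subset\mathbb{K}^{d\times r}$ be a g-frame with g-frame operator $S=\sum_{j=1}^nT_jT_j^*$. Then $\operatorname{trace}(T_j^*S^{-1}T_j)\le r$ for all $j=1,\ldots,n$. Moreover, if $\operatorname{trace}(T_j^*S^{-1}T_j)=r$ for some $j$, then $T_j$ has no zero columns and $\operatorname{range}(S^{-1/2}T_k)\perp\operatorname{range}(S^{-1/2}T_j)$ for all $k\neq j$.
   Context: A collection $\{T_j\}_{j=1}^n\subset\mathbb{K}^{d\times r}$ is a g-frame if there are constants $0<A\le B<\infty$ with $A\|x\|^2\le\sum_{j=1}^n\|T_j^*x\|^2\le B\|x\|^2$ for all $x\in\mathbb{K}^d$. $S^{-1/2}$ is the inverse of the positive definite square root of $S$. *)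

theory Defs
  imports "Jordan_Normal_Form.Schur_Decomposition" "HOL-Library.Complex_Order"
begin

(* Matrices over K in {R, C} are represented as complex matrices (JNF type complex mat)
   whose entries lie in K; for K = R the conjugate transpose is the transpose. *)

definition field_K :: "complex set \<Rightarrow> bool" where
  "field_K K \<longleftrightarrow> K = \<real> \<or> K = UNIV"

definition entries_in :: "complex set \<Rightarrow> complex mat \<Rightarrow> bool" where
  "entries_in K M \<longleftrightarrow> (\<forall>a < dim_row M. \<forall>b < dim_col M. M $$ (a, b) \<in> K)"

definition norm_sq_vec :: "complex vec \<Rightarrow> real" where
  "norm_sq_vec v = Re (v \<bullet>c v)"

definition is_gframe :: "nat \<Rightarrow> nat \<Rightarrow> nat \<Rightarrow> (nat \<Rightarrow> complex mat) \<Rightarrow> bool" where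
  "is_gframe d r n T \<longleftrightarrow> (\<forall>j\<in>{1..n}. T j \<in> carrier_mat d r) \<and>
     (\<exists>A B. 0 < A \<and> A \<le> B \<and>
        (\<forall>x \<in> carrier_vec d.
           A * norm_sq_vec x \<le> (\<Sum>j=1..n. norm_sq_vec (mat_adjoint (T j) *\<^sub>v x)) \<and>
           (\<Sum>j=1..n. norm_sq_vec (mat_adjoint (T j) *\<^sub>v x)) \<le> B * norm_sq_vec x))"

definition gframe_op :: "nat \<Rightarrow> nat \<Rightarrow> (nat \<Rightarrow> complex mat) \<Rightarrow> complex mat" where
  "gframe_op d n T = mat d d (\<lambda>(a, b). \<Sum>j=1..n. (T j * mat_adjoint (T j)) $$ (a, b))"

definition mtrace :: "complex mat \<Rightarrow> complex" where
  "mtrace M = (\<Sum>i<dim_row M. M $$ (i, i))"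

definition positive_definite :: "nat \<Rightarrow> complex mat \<Rightarrow> bool" where
  "positive_definite d R \<longleftrightarrow> R \<in> carrier_mat d d \<and> mat_adjoint R = R \<and>
     (\<forall>v \<in> carrier_vec d. v \<noteq> 0\<^sub>v d \<longrightarrow> (R *\<^sub>v v) \<bullet>c v > 0)"

definition pd_sqrt :: "nat \<Rightarrow> complex mat \<Rightarrow> complex mat" where
  "pd_sqrt d S = (THE R. positive_definite d R \<and> R * R = S)"

definition mat_inv :: "nat \<Rightarrow> complex mat \<Rightarrow> complex mat" where
  "mat_inv d M = (THE B. B \<in> carrier_mat d d \<and> M * B = 1\<^sub>m d \<and> B * M = 1\<^sub>m d)"

definition mat_range :: "complex mat \<Rightarrow> complex vec set" where
  "mat_range M = {M *\<^sub>v x | x. x \<in> carrier_vec (dim_col M)}"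

definition orth_sets :: "complex vec set \<Rightarrow> complex vec set \<Rightarrow> bool" where
  "orth_sets U V \<longleftrightarrow> (\<forall>u\<in>U. \<forall>v\<in>V. u \<bullet>c v = 0)"

end

theory Submission
  imports Defs
begin

text \<open>
  Put \<open>W\<^sub>k = S\<^sup>-\<^sup>1\<^sup>/\<^sup>2 T\<^sub>k\<close>; then \<open>\<Sum>\<^sub>k W\<^sub>k W\<^sub>k\<^sup>* = 1\<close> and \<open>T\<^sub>j\<^sup>* S\<^sup>-\<^sup>1 T\<^sub>j = M\<close> with \<open>M = W\<^sub>j\<^sup>* W\<^sub>j\<close>.
  Multiplying the Parseval identity by \<open>W\<^sub>j\<^sup>*\<close> and \<open>W\<^sub>j\<close> gives
  \<open>M = M\<^sup>2 + \<Sum>\<^bsub>k\<noteq>j\<^esub> N\<^sub>k\<^sup>* N\<^sub>k\<close> with \<open>N\<^sub>k = W\<^sub>k\<^sup>* W\<^sub>j\<close>, so \<open>tr M = tr M\<^sup>2 + s\<close> with \<open>s \<ge> 0\<close>. Then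
  \<open>0 \<le> tr ((1 - M)\<^sup>2) = r - 2 tr M + tr M\<^sup>2 = r - tr M - s\<close>, hence \<open>tr M \<le> r\<close>; and in case of
  equality \<open>M = 1\<close> (so no column of \<open>T\<^sub>j\<close> vanishes) and every \<open>N\<^sub>k = 0\<close> (orthogonal ranges).
  The inverse square root of the positive definite frame operator comes from its spectral
  decomposition, constructed one eigenvector at a time.
\<close>

lemma row_scalar_prod_col[simp]:
  "i < dim_row A \<Longrightarrow> j < dim_col B \<Longrightarrow> dim_col A = dim_row B \<Longrightarrow>
   row A i \<bullet> col B j = (\<Sum>l<dim_row B. A $$ (i, l) * B $$ (l, j))"
  by (auto simp: scalar_prod_def atLeast0LessThan intro!: sum.cong)

lemma row_scalar_prod[simp]:
  "i < dim_row A \<Longrightarrow> dim_col A = dim_vec v \<Longrightarrow> row A i \<bullet> v = (\<Sum>l<dim_vec v. A $$ (i, l) * v $ l)"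
  by (simp add: scalar_prod_def atLeast0LessThan)

lemma index_mult_mat_sum:
  "A \<in> carrier_mat n m \<Longrightarrow> B \<in> carrier_mat m p \<Longrightarrow> i < n \<Longrightarrow> j < p \<Longrightarrow>
   (A * B) $$ (i, j) = (\<Sum>l<m. A $$ (i, l) * B $$ (l, j))"
  by (auto simp: scalar_prod_def atLeast0LessThan intro!: sum.cong)

lemma index_mult_mat_vec_sum:
  "A \<in> carrier_mat n m \<Longrightarrow> v \<in> carrier_vec m \<Longrightarrow> i < n \<Longrightarrow>
   (A *\<^sub>v v) $ i = (\<Sum>l<m. A $$ (i, l) * v $ l)"
  by (simp add: scalar_prod_def atLeast0LessThan)

lemma minus_zero_mat[simp]: "A \<in> carrier_mat n m \<Longrightarrow> A - 0\<^sub>m n m = (A :: 'a :: group_add mat)"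
  by (rule eq_matI) auto

lemma minus_mat_eq_0_imp_eq:
  fixes A B :: "'a :: group_add mat"
  assumes A: "A \<in> carrier_mat n m" and B: "B \<in> carrier_mat n m" and AB: "A - B = 0\<^sub>m n m"
  shows "A = B"
proof (rule eq_matI)
  fix i j assume ij: "i < dim_row B" "j < dim_col B"
  have "(A - B) $$ (i, j) = 0" using AB ij B by simp
  with A B ij show "A $$ (i, j) = B $$ (i, j)" by simp
qed (use A B in auto)

lemma mult_mat_zero_vec[simp]: "A \<in> carrier_mat n m \<Longrightarrow> A *\<^sub>v 0\<^sub>v m = (0\<^sub>v n :: 'a :: semiring_0 vec)"
  by (intro eq_vecI) auto

lemma cscalar_prod_sum:
  fixes v w :: "complex vec"
  shows "dim_vec v = dim_vec w \<Longrightarrow> v \<bullet>c w = (\<Sum>i<dim_vec w. v $ i * cnj (w $ i))"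
  by (simp add: scalar_prod_def atLeast0LessThan)

lemma cscalar_prod_commute:
  fixes v w :: "complex vec"
  shows "dim_vec v = dim_vec w \<Longrightarrow> v \<bullet>c w = cnj (w \<bullet>c v)"
  by (simp add: cscalar_prod_sum mult.commute)

lemma cscalar_prod_self:
  fixes v :: "complex vec"
  shows "v \<bullet>c v = complex_of_real (norm_sq_vec v)"
proof -
  have "v \<bullet>c v = complex_of_real (\<Sum>i<dim_vec v. (Re (v $ i))\<^sup>2 + (Im (v $ i))\<^sup>2)"
    by (simp add: cscalar_prod_sum complex_mult_cnj)
  thus ?thesis unfolding norm_sq_vec_def by simp
qed

lemma index_mat_adjoint[simp]:
  fixes A :: "complex mat"
  shows "i < dim_col A \<Longrightarrow> j < dim_row A \<Longrightarrow> mat_adjoint A $$ (i, j) = cnj (A $$ (j, i))"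
  unfolding mat_adjoint_def by (simp add: mat_of_rows_def)

lemma dim_mat_adjoint[simp]:
  fixes A :: "complex mat"
  shows "dim_row (mat_adjoint A) = dim_col A" "dim_col (mat_adjoint A) = dim_row A"
  unfolding mat_adjoint_def by (simp_all add: mat_of_rows_def)

lemma mat_adjoint_carrier[simp]:
  fixes A :: "complex mat"
  shows "A \<in> carrier_mat n m \<Longrightarrow> mat_adjoint A \<in> carrier_mat m n"
  unfolding carrier_mat_def by simp

lemma mat_adjoint_adjoint[simp]:
  fixes A :: "complex mat"
  shows "mat_adjoint (mat_adjoint A) = A"
  by (rule eq_matI) auto

lemma mat_adjoint_one[simp]: "mat_adjoint (1\<^sub>m n) = (1\<^sub>m n :: complex mat)"
  by (rule eq_matI) auto

lemma mat_adjoint_minus: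
  fixes A B :: "complex mat"
  shows "A \<in> carrier_mat n m \<Longrightarrow> B \<in> carrier_mat n m \<Longrightarrow>
    mat_adjoint (A - B) = mat_adjoint A - mat_adjoint B"
  by (rule eq_matI) auto

lemma mat_adjoint_mult:
  fixes A B :: "complex mat"
  assumes "A \<in> carrier_mat n m" "B \<in> carrier_mat m p"
  shows "mat_adjoint (A * B) = mat_adjoint B * mat_adjoint A"
proof (rule eq_matI)
  fix i j assume "i < dim_row (mat_adjoint B * mat_adjoint A)" "j < dim_col (mat_adjoint B * mat_adjoint A)"
  with assms have ij: "i < p" "j < n" by auto
  have "mat_adjoint (A * B) $$ (i, j) = cnj (\<Sum>l<m. A $$ (j, l) * B $$ (l, i))"
    using assms ij by (simp add: index_mult_mat_sum)
  also have "\<dots> = (\<Sum>l<m. mat_adjoint B $$ (i, l) * mat_adjoint A $$ (l, j))"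
    using assms ij by (auto simp: cnj_sum intro!: sum.cong)
  also have "\<dots> = (mat_adjoint B * mat_adjoint A) $$ (i, j)"
    using assms ij by (subst index_mult_mat_sum[of _ p m _ n]) auto
  finally show "mat_adjoint (A * B) $$ (i, j) = (mat_adjoint B * mat_adjoint A) $$ (i, j)" .
qed (use assms in auto)

lemma mat_adjoint_cscalar_prod:
  fixes A :: "complex mat"
  assumes A: "A \<in> carrier_mat n m" and v: "v \<in> carrier_vec m" and w: "w \<in> carrier_vec n"
  shows "(A *\<^sub>v v) \<bullet>c w = v \<bullet>c (mat_adjoint A *\<^sub>v w)"
proof -
  have "(A *\<^sub>v v) \<bullet>c w = (\<Sum>a<n. \<Sum>b<m. A $$ (a, b) * v $ b * cnj (w $ a))"
    using A v w by (auto simp: cscalar_prod_sum index_mult_mat_vec_sum sum_distrib_right)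
  also have "\<dots> = (\<Sum>b<m. \<Sum>a<n. v $ b * cnj (cnj (A $$ (a, b)) * w $ a))"
    by (subst sum.swap) (simp add: mult_ac)
  also have "\<dots> = v \<bullet>c (mat_adjoint A *\<^sub>v w)"
    using A v w by (auto simp: cscalar_prod_sum index_mult_mat_vec_sum[of _ m n] cnj_sum sum_distrib_left
        intro!: sum.cong)
  finally show ?thesis .
qed

lemma index_mat_adjoint_mult_vec:
  fixes A :: "complex mat"
  shows "A \<in> carrier_mat n m \<Longrightarrow> u \<in> carrier_vec n \<Longrightarrow> i < m \<Longrightarrow> (mat_adjoint A *\<^sub>v u) $ i = u \<bullet>c col A i"
  by (simp add: cscalar_prod_sum mult.commute)

lemma orth_sets_mat_range:
  fixes A B :: "complex mat"
  assumes A: "A \<in> carrier_mat n p" and B: "B \<in> carrier_mat n q" and AB: "mat_adjoint A * B = 0\<^sub>m p q"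
  shows "orth_sets (mat_range A) (mat_range B)"
  unfolding orth_sets_def mat_range_def
proof (intro ballI, elim CollectE exE conjE)
  fix u v x y assume u: "u = A *\<^sub>v x" and x: "x \<in> carrier_vec (dim_col A)"
    and v: "v = B *\<^sub>v y" and y: "y \<in> carrier_vec (dim_col B)"
  have "u \<bullet>c v = x \<bullet>c ((mat_adjoint A * B) *\<^sub>v y)"
    using A B x y by (simp add: u v mat_adjoint_cscalar_prod[OF A] assoc_mult_mat_vec[of _ p n _ q])
  also have "\<dots> = 0" using AB x y A B by (simp add: cscalar_prod_sum)
  finally show "u \<bullet>c v = 0" .
qed

lemma col_nonzero_if_isometry:
  fixes A B :: "complex mat"
  assumes A: "A \<in> carrier_mat m n" and B: "B \<in> carrier_mat n p"
    and iso: "mat_adjoint (A * B) * (A * B) = 1\<^sub>m p" and c: "c < p"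
  shows "col B c \<noteq> 0\<^sub>v n"
proof
  assume "col B c = 0\<^sub>v n"
  hence "col (A * B) c = 0\<^sub>v m" by (simp only: col_mult2[OF A B c] mult_mat_zero_vec[OF A])
  hence "(mat_adjoint (A * B) * (A * B)) $$ (c, c) = 0"
    using A B c by (simp add: index_mult_mat del: row_scalar_prod_col)
  with iso c show False by simp
qed

lemma mtrace_mult_comm:
  assumes "A \<in> carrier_mat n m" "B \<in> carrier_mat m n"
  shows "mtrace (A * B) = mtrace (B * A)"
proof -
  have "mtrace (A * B) = (\<Sum>i<n. \<Sum>l<m. A $$ (i, l) * B $$ (l, i))"
    unfolding mtrace_def using assms by (auto simp: index_mult_mat_sum)
  also have "\<dots> = (\<Sum>l<m. \<Sum>i<n. B $$ (l, i) * A $$ (i, l))"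
    by (subst sum.swap) (simp add: mult.commute)
  also have "\<dots> = mtrace (B * A)"
    unfolding mtrace_def using assms by (auto simp: index_mult_mat_sum)
  finally show ?thesis .
qed

lemma mtrace_minus:
  "A \<in> carrier_mat n n \<Longrightarrow> B \<in> carrier_mat n n \<Longrightarrow> mtrace (A - B) = mtrace A - mtrace B"
  unfolding mtrace_def by (auto simp: sum_subtractf)

lemma mtrace_uminus: "A \<in> carrier_mat n n \<Longrightarrow> mtrace (- A) = - mtrace A"
  unfolding mtrace_def by (simp add: sum_negf)

lemma mtrace_one[simp]: "mtrace (1\<^sub>m n) = of_nat n"
  unfolding mtrace_def by simp

lemma mtrace_adjoint_mult_mult:
  fixes X A :: "complex mat"
  assumes X: "X \<in> carrier_mat n p" and A: "A \<in> carrier_mat n n"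
  shows "mtrace (mat_adjoint X * A * X) = (\<Sum>i<p. (A *\<^sub>v col X i) \<bullet>c col X i)"
  unfolding mtrace_def using X A
  by (auto simp: assoc_mult_mat[of _ p n _ n _ p] index_mult_mat_sum[of _ p n _ p]
      index_mult_mat_sum[of _ n n _ p] cscalar_prod_sum mult.commute sum_distrib_left intro!: sum.cong)

lemma mtrace_adjoint_mult:
  fixes X :: "complex mat"
  assumes X: "X \<in> carrier_mat n p"
  shows "mtrace (mat_adjoint X * X) = (\<Sum>i<p. col X i \<bullet>c col X i)"
  using mtrace_adjoint_mult_mult[OF X one_carrier_mat] X by simp

lemma mtrace_adjoint_mult_nonneg: "X \<in> carrier_mat n p \<Longrightarrow> 0 \<le> mtrace (mat_adjoint X * X)"
  unfolding mtrace_adjoint_mult by (auto intro: sum_nonneg)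

lemma mtrace_adjoint_mult_eq_0:
  assumes X: "X \<in> carrier_mat n p" and tr: "mtrace (mat_adjoint X * X) = 0"
  shows "X = 0\<^sub>m n p"
proof (rule mat_col_eqI)
  fix i assume "i < dim_col (0\<^sub>m n p)"
  hence "col X i \<bullet>c col X i = 0"
    using tr unfolding mtrace_adjoint_mult[OF X] by (subst (asm) sum_nonneg_eq_0_iff) auto
  with X \<open>i < _\<close> show "col X i = col (0\<^sub>m n p) i" by (auto simp: conjugate_square_eq_0_vec[of _ n])
qed (use X in auto)

lemma mtrace_eq_sum_list_roots:
  fixes A :: "complex mat"
  assumes A: "A \<in> carrier_mat n n" and cp: "char_poly A = (\<Prod>e\<leftarrow>es. [:- e, 1:])"
  shows "mtrace A = sum_list es"
proof -
  obtain B P Q where sd: "schur_decomposition A es = (B, P, Q)"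
    by (cases "schur_decomposition A es") auto
  from schur_decomposition[OF A cp sd]
  have sim: "similar_mat_wit A B P Q" and dB: "diag_mat B = es" by auto
  from sim A have B: "B \<in> carrier_mat n n" and P: "P \<in> carrier_mat n n" and Q: "Q \<in> carrier_mat n n"
    and QP: "Q * P = 1\<^sub>m n" and AB: "A = P * B * Q"
    unfolding similar_mat_wit_def Let_def by auto
  have "mtrace A = mtrace (Q * (P * B))"
    unfolding AB using B P Q by (intro mtrace_mult_comm[of _ n n]) auto
  also have "\<dots> = mtrace B"
    using B P Q QP by (simp add: assoc_mult_mat[of _ n n _ n _ n, symmetric])
  also have "\<dots> = sum_list es"
    unfolding dB[symmetric] mtrace_def diag_mat_def
    by (simp add: sum_set_upt_conv_sum_list_nat[symmetric] atLeast0LessThan)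
  finally show ?thesis .
qed

lemma nonzero_eigenvalue_if_mtrace_nonzero:
  fixes A :: "complex mat"
  assumes A: "A \<in> carrier_mat n n" and tr: "mtrace A \<noteq> 0"
  shows "\<exists>e. e \<noteq> 0 \<and> eigenvalue A e"
proof -
  obtain es where es: "char_poly A = (\<Prod>e\<leftarrow>es. [:- e, 1:])"
    using char_poly_factorized[OF A] by blast
  have "\<exists>e\<in>set es. e \<noteq> 0"
  proof (rule ccontr)
    assume "\<not> (\<exists>e\<in>set es. e \<noteq> 0)"
    hence "sum_list es = 0" by (induction es) auto
    with tr show False using mtrace_eq_sum_list_roots[OF A es] by simp
  qed
  then obtain e where e: "e \<in> set es" "e \<noteq> 0" by blast
  have "poly (char_poly A) e = 0"
    unfolding es poly_prod_list prod_list_zero_iff using e(1) by force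
  with e(2) show ?thesis using eigenvalue_root_char_poly[OF A] by blast
qed

definition mat_sum :: "nat \<Rightarrow> nat \<Rightarrow> 'i set \<Rightarrow> ('i \<Rightarrow> complex mat) \<Rightarrow> complex mat" where
  "mat_sum nr nc J F = mat nr nc (\<lambda>(a, b). \<Sum>j\<in>J. F j $$ (a, b))"

lemma dim_mat_sum[simp]: "dim_row (mat_sum nr nc J F) = nr" "dim_col (mat_sum nr nc J F) = nc"
  by (simp_all add: mat_sum_def)

lemma index_mat_sum[simp]: "a < nr \<Longrightarrow> b < nc \<Longrightarrow> mat_sum nr nc J F $$ (a, b) = (\<Sum>j\<in>J. F j $$ (a, b))"
  by (simp add: mat_sum_def)

lemma mat_sum_cong: "(\<And>k. k \<in> J \<Longrightarrow> F k = G k) \<Longrightarrow> mat_sum nr nc J F = mat_sum nr nc J G"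
  unfolding mat_sum_def by (intro cong_mat refl sum.cong) auto

lemma mult_mat_sum:
  assumes Y: "Y \<in> carrier_mat p m" and F: "\<And>j. j \<in> J \<Longrightarrow> F j \<in> carrier_mat m q"
  shows "Y * mat_sum m q J F = mat_sum p q J (\<lambda>j. Y * F j)"
proof (rule eq_matI)
  fix a b assume "a < dim_row (mat_sum p q J (\<lambda>j. Y * F j))" "b < dim_col (mat_sum p q J (\<lambda>j. Y * F j))"
  hence ab: "a < p" "b < q" by auto
  have "(Y * mat_sum m q J F) $$ (a, b) = (\<Sum>l<m. \<Sum>j\<in>J. Y $$ (a, l) * F j $$ (l, b))"
    using Y ab by (simp add: index_mult_mat_sum[of _ p m _ q] sum_distrib_left)
  also have "\<dots> = (\<Sum>j\<in>J. (Y * F j) $$ (a, b))"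
    using Y F ab by (subst sum.swap) (auto simp: index_mult_mat_sum[of _ p m _ q] intro!: sum.cong)
  finally show "(Y * mat_sum m q J F) $$ (a, b) = mat_sum p q J (\<lambda>j. Y * F j) $$ (a, b)"
    using ab by simp
qed (use Y in auto)

lemma mat_sum_mult:
  assumes F: "\<And>j. j \<in> J \<Longrightarrow> F j \<in> carrier_mat p m" and X: "X \<in> carrier_mat m q"
  shows "mat_sum p m J F * X = mat_sum p q J (\<lambda>j. F j * X)"
proof (rule eq_matI)
  fix a b assume "a < dim_row (mat_sum p q J (\<lambda>j. F j * X))" "b < dim_col (mat_sum p q J (\<lambda>j. F j * X))"
  hence ab: "a < p" "b < q" by auto
  have "(mat_sum p m J F * X) $$ (a, b) = (\<Sum>l<m. \<Sum>j\<in>J. F j $$ (a, l) * X $$ (l, b))"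
    using X ab by (simp add: index_mult_mat_sum[of _ p m _ q] sum_distrib_right)
  also have "\<dots> = (\<Sum>j\<in>J. (F j * X) $$ (a, b))"
    using X F ab by (subst sum.swap) (auto simp: index_mult_mat_sum[of _ p m _ q] intro!: sum.cong)
  finally show "(mat_sum p m J F * X) $$ (a, b) = mat_sum p q J (\<lambda>j. F j * X) $$ (a, b)"
    using ab by simp
qed (use X in auto)

lemma mtrace_mat_sum:
  assumes "\<And>j. j \<in> J \<Longrightarrow> F j \<in> carrier_mat n n"
  shows "mtrace (mat_sum n n J F) = (\<Sum>j\<in>J. mtrace (F j))"
  unfolding mtrace_def using assms by (simp add: sum.swap[of _ J] carrier_matD[OF assms])

lemma mat_adjoint_mat_sum:
  assumes "\<And>j. j \<in> J \<Longrightarrow> F j \<in> carrier_mat n m"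
  shows "mat_adjoint (mat_sum n m J F) = mat_sum m n J (\<lambda>j. mat_adjoint (F j))"
  using assms by (intro eq_matI) (auto simp: cnj_sum carrier_matD[OF assms] intro!: sum.cong)

lemma mat_sum_quadratic_form:
  assumes F: "\<And>j. j \<in> J \<Longrightarrow> F j \<in> carrier_mat n n" and x: "x \<in> carrier_vec n"
  shows "(mat_sum n n J F *\<^sub>v x) \<bullet>c x = (\<Sum>j\<in>J. (F j *\<^sub>v x) \<bullet>c x)"
proof -
  have "(mat_sum n n J F *\<^sub>v x) \<bullet>c x = (\<Sum>a<n. \<Sum>l<n. \<Sum>j\<in>J. F j $$ (a, l) * x $ l * cnj (x $ a))"
    using x by (simp add: cscalar_prod_sum sum_distrib_right)
  also have "\<dots> = (\<Sum>j\<in>J. \<Sum>a<n. \<Sum>l<n. F j $$ (a, l) * x $ l * cnj (x $ a))"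
    by (simp add: sum.swap[of _ J])
  also have "\<dots> = (\<Sum>j\<in>J. (F j *\<^sub>v x) \<bullet>c x)"
  proof (rule sum.cong[OF refl])
    fix j assume "j \<in> J"
    hence Fj: "F j \<in> carrier_mat n n" by (rule F)
    with x show "(\<Sum>a<n. \<Sum>l<n. F j $$ (a, l) * x $ l * cnj (x $ a)) = (F j *\<^sub>v x) \<bullet>c x"
      by (simp add: cscalar_prod_sum index_mult_mat_vec_sum[OF Fj x] sum_distrib_right carrier_matD[OF Fj])
  qed
  finally show ?thesis .
qed

lemma mat_sum_congruence:
  assumes G: "G \<in> carrier_mat d d" and Gh: "mat_adjoint G = G"
    and T: "\<And>k. k \<in> J \<Longrightarrow> T k \<in> carrier_mat d r"
  shows "G * mat_sum d d J (\<lambda>k. T k * mat_adjoint (T k)) * G =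
    mat_sum d d J (\<lambda>k. (G * T k) * mat_adjoint (G * T k))"
proof -
  have TT: "T k * mat_adjoint (T k) \<in> carrier_mat d d" if "k \<in> J" for k
    using T[OF that] by (simp add: mult_carrier_mat[of _ d r])
  have "G * mat_sum d d J (\<lambda>k. T k * mat_adjoint (T k)) * G =
    mat_sum d d J (\<lambda>k. G * (T k * mat_adjoint (T k)) * G)"
    using G TT by (simp add: mult_mat_sum[OF G TT] mat_sum_mult[OF _ G] mult_carrier_mat[of _ d d])
  also have "\<dots> = mat_sum d d J (\<lambda>k. (G * T k) * mat_adjoint (G * T k))"
  proof (rule mat_sum_cong)
    fix k assume "k \<in> J"
    hence Tk: "T k \<in> carrier_mat d r" by (rule T)
    have Tkh: "mat_adjoint (T k) \<in> carrier_mat r d" using Tk by simp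
    show "G * (T k * mat_adjoint (T k)) * G = G * T k * mat_adjoint (G * T k)"
      using Gh by (simp add: mat_adjoint_mult[OF G Tk] assoc_mult_mat[OF G mult_carrier_mat[OF Tk Tkh] G]
          assoc_mult_mat[OF Tk Tkh G] assoc_mult_mat[OF G Tk mult_carrier_mat[OF Tkh G]])
  qed
  finally show ?thesis .
qed

lemma mtrace_mat_sum_congruence:
  assumes X: "X \<in> carrier_mat d r" and W: "\<And>k. k \<in> J \<Longrightarrow> W k \<in> carrier_mat d r"
  shows "mtrace (mat_adjoint X * mat_sum d d J (\<lambda>k. W k * mat_adjoint (W k)) * X) =
    (\<Sum>k\<in>J. mtrace (mat_adjoint (mat_adjoint (W k) * X) * (mat_adjoint (W k) * X)))"
proof -
  have WW: "W k * mat_adjoint (W k) \<in> carrier_mat d d" if "k \<in> J" for k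
    using W[OF that] by (simp add: mult_carrier_mat[of _ d r])
  have "mat_adjoint X * mat_sum d d J (\<lambda>k. W k * mat_adjoint (W k)) * X =
    mat_sum r r J (\<lambda>k. mat_adjoint X * (W k * mat_adjoint (W k)) * X)"
    using X WW
    by (simp add: mult_mat_sum[where p = r and m = d] mat_sum_mult[where p = r and m = d]
        mult_carrier_mat[of _ r d])
  also have "\<dots> = mat_sum r r J (\<lambda>k. mat_adjoint (mat_adjoint (W k) * X) * (mat_adjoint (W k) * X))"
  proof (intro mat_sum_cong)
    fix k assume "k \<in> J"
    hence Wk: "W k \<in> carrier_mat d r" by (rule W)
    have Xh: "mat_adjoint X \<in> carrier_mat r d" and Wkh: "mat_adjoint (W k) \<in> carrier_mat r d"
      using X Wk by simp_all
    show "mat_adjoint X * (W k * mat_adjoint (W k)) * X =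
      mat_adjoint (mat_adjoint (W k) * X) * (mat_adjoint (W k) * X)"
      by (simp add: mat_adjoint_mult[OF Wkh X] assoc_mult_mat[OF Xh mult_carrier_mat[OF Wk Wkh] X]
          assoc_mult_mat[OF Wk Wkh X] assoc_mult_mat[OF Xh Wk mult_carrier_mat[OF Wkh X]])
  qed
  moreover have "mat_adjoint (mat_adjoint (W k) * X) * (mat_adjoint (W k) * X) \<in> carrier_mat r r"
    if "k \<in> J" for k
    using X W[OF that] by (meson mat_adjoint_carrier mult_carrier_mat)
  ultimately show ?thesis by (simp add: mtrace_mat_sum)
qed

section \<open>Positive definite matrices and their square roots\<close>

lemma positive_definite_quadratic_nonneg:
  assumes R: "positive_definite d R" and v: "v \<in> carrier_vec d"
  shows "0 \<le> (R *\<^sub>v v) \<bullet>c v"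
proof (cases "v = 0\<^sub>v d")
  case True
  have "R *\<^sub>v v \<in> carrier_vec d" using R v mult_mat_vec_carrier unfolding positive_definite_def by blast
  with True show ?thesis by (simp add: cscalar_prod_sum)
next
  case False
  with R v show ?thesis by (auto simp: positive_definite_def intro: less_imp_le)
qed

lemma mtrace_quadratic_nonneg:
  assumes R: "positive_definite d R" and X: "X \<in> carrier_mat d p"
  shows "0 \<le> mtrace (mat_adjoint X * R * X)"
  using R X by (auto simp: mtrace_adjoint_mult_mult positive_definite_def
      intro!: sum_nonneg positive_definite_quadratic_nonneg[OF R])

lemma mtrace_quadratic_eq_0:
  assumes R: "positive_definite d R" and X: "X \<in> carrier_mat d p"
    and tr: "mtrace (mat_adjoint X * R * X) = 0"
  shows "X = 0\<^sub>m d p"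
proof -
  have Rc: "R \<in> carrier_mat d d" using R by (simp add: positive_definite_def)
  have "(\<Sum>i<p. (R *\<^sub>v col X i) \<bullet>c col X i) = 0"
    using tr mtrace_adjoint_mult_mult[OF X Rc] by simp
  moreover have "\<And>i. i < p \<Longrightarrow> 0 \<le> (R *\<^sub>v col X i) \<bullet>c col X i"
    using X by (intro positive_definite_quadratic_nonneg[OF R]) auto
  ultimately have "\<forall>i<p. (R *\<^sub>v col X i) \<bullet>c col X i = 0"
    by (subst (asm) sum_nonneg_eq_0_iff) auto
  hence "\<forall>i<p. col X i = 0\<^sub>v d"
    using R X unfolding positive_definite_def by (metis carrier_matD(1) carrier_vecI col_dim order.irrefl)
  thus ?thesis using X by (intro mat_col_eqI) auto
qed

lemma positive_definite_square_root_unique: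
  assumes R: "positive_definite d R" and Q: "positive_definite d Q" and RQ: "R * R = Q * Q"
  shows "R = Q"
proof -
  have Rc: "R \<in> carrier_mat d d" and Qc: "Q \<in> carrier_mat d d"
    and Rh: "mat_adjoint R = R" and Qh: "mat_adjoint Q = Q"
    using R Q by (auto simp: positive_definite_def)
  define H where "H = R - Q"
  have Hc: "H \<in> carrier_mat d d" using Rc Qc by (simp add: H_def minus_carrier_mat)
  have Hh: "mat_adjoint H = H" using Rc Qc Rh Qh by (simp add: H_def mat_adjoint_minus)
  \<comment> \<open>\<open>R\<^sup>2 = Q\<^sup>2\<close> gives \<open>R H = - H Q\<close>, so the two nonnegative traces below are opposite.\<close>
  have RH: "R * H = - (H * Q)"
  proof -
    have "R * H = Q * Q - R * Q" using Rc Qc RQ by (simp add: H_def mult_minus_distrib_mat)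
    also have "\<dots> = - ((R - Q) * Q)" using Rc Qc
      by (subst minus_mult_distrib_mat[of _ d d]) (auto simp: minus_add_uminus_mat[of _ d d] uminus_add_mat)
    finally show ?thesis by (simp add: H_def)
  qed
  have "mtrace (mat_adjoint H * R * H) = mtrace ((R * H) * H)"
    using Hh Hc Rc by (simp add: assoc_mult_mat[of _ d d _ d _ d] mtrace_mult_comm[of H d d "R * H"])
  also have "\<dots> = - mtrace (mat_adjoint H * Q * H)"
    using RH Hh Hc Qc by (simp add: mtrace_uminus[of _ d] assoc_mult_mat[of _ d d _ d _ d]
        mtrace_mult_comm[of H d d "Q * H"])
  finally have "mtrace (mat_adjoint H * R * H) = - mtrace (mat_adjoint H * Q * H)" .
  with mtrace_quadratic_nonneg[OF R Hc] mtrace_quadratic_nonneg[OF Q Hc]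
  have "mtrace (mat_adjoint H * R * H) = 0" by (metis neg_le_0_iff_le order.antisym)
  hence "H = 0\<^sub>m d d" by (rule mtrace_quadratic_eq_0[OF R Hc])
  thus ?thesis unfolding H_def by (rule minus_mat_eq_0_imp_eq[OF Rc Qc])
qed

lemma pd_sqrt_eqI:
  assumes "positive_definite d R" "R * R = S"
  shows "pd_sqrt d S = R"
  unfolding pd_sqrt_def
  using assms positive_definite_square_root_unique by (intro the_equality) auto

lemma mat_inv_eqI:
  assumes M: "M \<in> carrier_mat d d" and B: "B \<in> carrier_mat d d" and MB: "M * B = 1\<^sub>m d"
    and BM: "B * M = 1\<^sub>m d"
  shows "mat_inv d M = B"
  unfolding mat_inv_def
proof (rule the_equality)
  fix C assume C: "C \<in> carrier_mat d d \<and> M * C = 1\<^sub>m d \<and> C * M = 1\<^sub>m d"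
  hence "C = C * (M * B)" using MB right_mult_one_mat[of C d d] by simp
  also have "\<dots> = B" using C M B BM by (simp add: assoc_mult_mat[of _ d d _ d _ d, symmetric])
  finally show "C = B" .
qed (use B MB BM in simp)

definition unitary :: "nat \<Rightarrow> complex mat \<Rightarrow> bool" where
  "unitary d U \<longleftrightarrow> U \<in> carrier_mat d d \<and> mat_adjoint U * U = 1\<^sub>m d \<and> U * mat_adjoint U = 1\<^sub>m d"

definition unitary_diag :: "complex mat \<Rightarrow> nat \<Rightarrow> (nat \<Rightarrow> real) \<Rightarrow> complex mat" where
  "unitary_diag U d f = U * mat_diag d (\<lambda>i. complex_of_real (f i)) * mat_adjoint U"

lemma unitary_diag_cong: "(\<And>i. i < d \<Longrightarrow> f i = g i) \<Longrightarrow> unitary_diag U d f = unitary_diag U d g"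
  unfolding unitary_diag_def mat_diag_def by (intro arg_cong2[where f = "(*)"] refl) auto

lemma mat_diag_mult_vec:
  "w \<in> carrier_vec d \<Longrightarrow> mat_diag d g *\<^sub>v w = vec d (\<lambda>i. g i * w $ i)"
  by (intro eq_vecI) (auto simp: mat_diag_def scalar_prod_def if_distrib[of "\<lambda>x. x * _"] sum.delta' cong: if_cong)

context
  fixes U :: "complex mat" and d :: nat
  assumes U: "unitary d U"
begin

lemma unitary_carrier: "U \<in> carrier_mat d d" "mat_adjoint U \<in> carrier_mat d d"
  using U by (auto simp: unitary_def)

lemma unitary_diag_carrier[simp]: "unitary_diag U d f \<in> carrier_mat d d"
  using unitary_carrier unfolding unitary_diag_def by (meson mat_diag_dim mult_carrier_mat)

lemma unitary_diag_mult: "unitary_diag U d f * unitary_diag U d g = unitary_diag U d (\<lambda>i. f i * g i)"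
proof -
  let ?D = "\<lambda>f. mat_diag d (\<lambda>i. complex_of_real (f i))"
  have D: "?D f \<in> carrier_mat d d" "?D g \<in> carrier_mat d d" by auto
  have "unitary_diag U d f * unitary_diag U d g = U * (?D f * (mat_adjoint U * U) * ?D g) * mat_adjoint U"
    unfolding unitary_diag_def using unitary_carrier D
    by (simp add: assoc_mult_mat[of _ d d _ d _ d] mult_carrier_mat[of _ d d _ d])
  thus ?thesis using U by (simp add: unitary_def unitary_diag_def right_mult_one_mat[of _ d d])
qed

lemma unitary_diag_one: "unitary_diag U d (\<lambda>_. 1) = 1\<^sub>m d"
  using U by (simp add: unitary_def unitary_diag_def right_mult_one_mat[of _ d d])

lemma unitary_diag_mult_cong:
  assumes "\<And>i. i < d \<Longrightarrow> f i * g i = h i"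
  shows "unitary_diag U d f * unitary_diag U d g = unitary_diag U d h"
  using unitary_diag_mult unitary_diag_cong[OF assms] by simp

lemma unitary_diag_mult_eq_one:
  assumes "\<And>i. i < d \<Longrightarrow> f i * g i = 1"
  shows "unitary_diag U d f * unitary_diag U d g = 1\<^sub>m d"
  using unitary_diag_mult_cong[OF assms] unitary_diag_one by simp

lemma mat_adjoint_unitary_diag[simp]: "mat_adjoint (unitary_diag U d f) = unitary_diag U d f"
proof -
  have "mat_adjoint (mat_diag d (\<lambda>i. complex_of_real (f i))) = mat_diag d (\<lambda>i. complex_of_real (f i))"
    by (intro eq_matI) (auto simp: mat_diag_def)
  thus ?thesis using unitary_carrier unfolding unitary_diag_def
    by (simp add: mat_adjoint_mult[of _ d d _ d] mult_carrier_mat[of _ d d _ d] assoc_mult_mat[of _ d d _ d _ d])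
qed

lemma positive_definite_unitary_diag:
  assumes f: "\<And>i. i < d \<Longrightarrow> 0 < f i"
  shows "positive_definite d (unitary_diag U d f)"
  unfolding positive_definite_def
proof (intro conjI ballI impI unitary_diag_carrier mat_adjoint_unitary_diag)
  fix v :: "complex vec" assume v: "v \<in> carrier_vec d" and v0: "v \<noteq> 0\<^sub>v d"
  have Uc: "U \<in> carrier_mat d d" "mat_adjoint U \<in> carrier_mat d d" by (fact unitary_carrier)+
  define w where "w = mat_adjoint U *\<^sub>v v"
  have w: "w \<in> carrier_vec d" unfolding w_def using Uc(2) v by (rule mult_mat_vec_carrier)
  have "U *\<^sub>v w = v"
    using U v by (simp add: w_def unitary_def assoc_mult_mat_vec[of _ d d _ d, symmetric])
  hence "w \<noteq> 0\<^sub>v d" using v0 Uc by auto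
  then obtain i where i: "i < d" "w $ i \<noteq> 0" using w by (auto simp: vec_eq_iff)
  let ?D = "mat_diag d (\<lambda>i. complex_of_real (f i))"
  have "unitary_diag U d f *\<^sub>v v = U *\<^sub>v (?D *\<^sub>v w)"
    unfolding unitary_diag_def w_def using Uc v w[unfolded w_def]
    by (simp add: assoc_mult_mat_vec[of _ d d _ d] mult_carrier_mat[of _ d d _ d])
  hence "(unitary_diag U d f *\<^sub>v v) \<bullet>c v = (?D *\<^sub>v w) \<bullet>c w"
    using mat_adjoint_cscalar_prod[OF Uc(1) mult_mat_vec_carrier[OF mat_diag_dim w] v] by (simp add: w_def)
  also have "\<dots> = complex_of_real (\<Sum>i<d. f i * (cmod (w $ i))\<^sup>2)"
    using w by (simp add: mat_diag_mult_vec cscalar_prod_sum mult.assoc flip: complex_norm_square)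
  moreover have "0 < (\<Sum>i<d. f i * (cmod (w $ i))\<^sup>2)"
    using f i by (intro sum_pos2[of "{..<d}" i]) (auto simp: order.strict_implies_order)
  ultimately show "0 < (unitary_diag U d f *\<^sub>v v) \<bullet>c v"
    by (simp add: less_complex_def)
qed

end

lemma unitary_diag_inverse_square_root:
  assumes U: "unitary d U" and f: "\<And>i. i < d \<Longrightarrow> 0 < f i"
  defines "G \<equiv> unitary_diag U d (\<lambda>i. 1 / sqrt (f i))"
  shows "mat_inv d (pd_sqrt d (unitary_diag U d f)) = G"
    and "mat_inv d (unitary_diag U d f) = G * G"
    and "G * unitary_diag U d f * G = 1\<^sub>m d"
proof -
  note [simp] = unitary_diag_carrier[OF U]
  define R where "R = unitary_diag U d (\<lambda>i. sqrt (f i))"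
  have "R * R = unitary_diag U d f"
    unfolding R_def using f by (intro unitary_diag_mult_cong[OF U]) (simp add: less_imp_le)
  hence "pd_sqrt d (unitary_diag U d f) = R"
    using f by (intro pd_sqrt_eqI) (simp_all add: R_def positive_definite_unitary_diag[OF U])
  moreover have "mat_inv d R = G"
    unfolding R_def G_def by (intro mat_inv_eqI unitary_diag_mult_eq_one[OF U]) (auto dest!: f)
  ultimately show "mat_inv d (pd_sqrt d (unitary_diag U d f)) = G" by simp
  have GG: "G * G = unitary_diag U d (\<lambda>i. 1 / f i)"
    unfolding G_def using f
    by (intro unitary_diag_mult_cong[OF U]) (simp add: less_imp_le real_sqrt_mult[symmetric])
  show "mat_inv d (unitary_diag U d f) = G * G"
    unfolding GG by (intro mat_inv_eqI unitary_diag_mult_eq_one[OF U]) (auto dest!: f)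
  have "G * unitary_diag U d f = unitary_diag U d (\<lambda>i. sqrt (f i))"
    unfolding G_def using f
    by (intro unitary_diag_mult_cong[OF U]) (simp add: less_imp_le field_simps real_div_sqrt)
  moreover have "unitary_diag U d (\<lambda>i. sqrt (f i)) * G = 1\<^sub>m d"
    unfolding G_def by (rule unitary_diag_mult_eq_one[OF U]) (auto dest!: f)
  ultimately show "G * unitary_diag U d f * G = 1\<^sub>m d" by simp
qed

section \<open>Spectral decomposition of positive definite matrices\<close>

lemma complement_projection:
  fixes V :: "complex mat"
  assumes V: "V \<in> carrier_mat d k" and VV: "mat_adjoint V * V = 1\<^sub>m k"
  defines "Q \<equiv> 1\<^sub>m d - V * mat_adjoint V"
  shows "Q \<in> carrier_mat d d" and "mat_adjoint Q = Q" and "mat_adjoint V * Q = 0\<^sub>m k d"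
    and "mtrace Q = of_nat d - of_nat k"
proof -
  have Vh: "mat_adjoint V \<in> carrier_mat k d" using V by simp
  have VVh: "V * mat_adjoint V \<in> carrier_mat d d" using V by (simp add: mult_carrier_mat[of _ d k])
  show "Q \<in> carrier_mat d d" by (simp add: Q_def minus_carrier_mat VVh)
  show "mat_adjoint Q = Q"
    using V by (simp add: Q_def mat_adjoint_minus[OF one_carrier_mat VVh] mat_adjoint_mult[OF V Vh])
  have "mat_adjoint V * Q = mat_adjoint V * 1\<^sub>m d - mat_adjoint V * (V * mat_adjoint V)"
    unfolding Q_def by (rule mult_minus_distrib_mat[OF Vh one_carrier_mat VVh])
  also have "\<dots> = mat_adjoint V - mat_adjoint V * V * mat_adjoint V"
    by (simp add: assoc_mult_mat[OF Vh V Vh] right_mult_one_mat[OF Vh])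
  finally show "mat_adjoint V * Q = 0\<^sub>m k d"
    using VV by (simp add: left_mult_one_mat[OF Vh] minus_r_inv_mat[OF Vh])
  show "mtrace Q = of_nat d - of_nat k"
    unfolding Q_def using mtrace_minus[OF one_carrier_mat VVh] mtrace_mult_comm[OF V Vh] VV by simp
qed

lemma complement_projection_invariant:
  fixes S V :: "complex mat"
  assumes S: "S \<in> carrier_mat d d" and Sh: "mat_adjoint S = S"
    and V: "V \<in> carrier_mat d k" and VV: "mat_adjoint V * V = 1\<^sub>m k"
    and L: "L \<in> carrier_mat k k" and SV: "S * V = V * L"
  defines "Q \<equiv> 1\<^sub>m d - V * mat_adjoint V"
  shows "Q * (S * Q) = S * Q"
proof -
  note Q = complement_projection[OF V VV, folded Q_def]
  have Vh: "mat_adjoint V \<in> carrier_mat k d" and Lh: "mat_adjoint L \<in> carrier_mat k k"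
    using V L by simp_all
  have SQ: "S * Q \<in> carrier_mat d d" using S Q(1) by simp
  have VhS: "mat_adjoint V * S = mat_adjoint L * mat_adjoint V"
    using mat_adjoint_mult[OF S V] mat_adjoint_mult[OF V L] SV Sh by simp
  have "V * mat_adjoint V * (S * Q) = V * (mat_adjoint V * S * Q)"
    by (simp add: assoc_mult_mat[OF V Vh SQ] assoc_mult_mat[OF Vh S Q(1)])
  also have "\<dots> = V * (mat_adjoint L * (mat_adjoint V * Q))"
    unfolding VhS by (simp add: assoc_mult_mat[OF Lh Vh Q(1)])
  also have "\<dots> = 0\<^sub>m d d" unfolding Q(3) by (simp add: right_mult_zero_mat[OF Lh] right_mult_zero_mat[OF V])
  finally have "V * mat_adjoint V * (S * Q) = 0\<^sub>m d d" .
  moreover have "Q * (S * Q) = 1\<^sub>m d * (S * Q) - V * mat_adjoint V * (S * Q)"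
    unfolding Q_def by (rule minus_mult_distrib_mat[OF one_carrier_mat _ SQ[unfolded Q_def]]) (use V in simp)
  ultimately show ?thesis by (simp add: left_mult_one_mat[OF SQ] SQ)
qed

lemma eigenvector_orthogonal_to_invariant_subspace:
  assumes S: "positive_definite d S" and V: "V \<in> carrier_mat d k"
    and VV: "mat_adjoint V * V = 1\<^sub>m k" and L: "L \<in> carrier_mat k k" and SV: "S * V = V * L"
    and k: "k < d"
  shows "\<exists>y e. eigenvector S y e \<and> mat_adjoint V *\<^sub>v y = 0\<^sub>v k"
proof -
  \<comment> \<open>\<open>S Q\<close> has a nonzero eigenvalue since \<open>tr (S Q) = tr (Q\<^sup>* S Q) > 0\<close>, and \<open>Q\<close> maps a
    corresponding eigenvector of \<open>S Q = Q S Q\<close> to an eigenvector of \<open>S\<close>.\<close>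
  define Q where "Q = 1\<^sub>m d - V * mat_adjoint V"
  have Sc: "S \<in> carrier_mat d d" and Sh: "mat_adjoint S = S"
    using S by (auto simp: positive_definite_def)
  note Q = complement_projection[OF V VV, folded Q_def]
  have QSQ: "Q * (S * Q) = S * Q"
    unfolding Q_def by (rule complement_projection_invariant[OF Sc Sh V VV L SV])
  have SQ: "S * Q \<in> carrier_mat d d" using Sc Q(1) by simp
  have "Q \<noteq> 0\<^sub>m d d" using Q(4) k by (auto simp: mtrace_def)
  hence "mtrace (mat_adjoint Q * S * Q) \<noteq> 0" using mtrace_quadratic_eq_0[OF S Q(1)] by blast
  hence "mtrace (S * Q) \<noteq> 0" using Q(2) QSQ by (simp add: assoc_mult_mat[OF Q(1) Sc Q(1)])
  then obtain e x where e: "e \<noteq> 0" and "eigenvector (S * Q) x e"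
    using nonzero_eigenvalue_if_mtrace_nonzero[OF SQ] unfolding eigenvalue_def by blast
  hence x: "x \<in> carrier_vec d" and x0: "x \<noteq> 0\<^sub>v d" and SQx: "(S * Q) *\<^sub>v x = e \<cdot>\<^sub>v x"
    using SQ by (auto simp: eigenvector_def)
  define y where "y = Q *\<^sub>v x"
  have "S *\<^sub>v y = (Q * (S * Q)) *\<^sub>v x" unfolding QSQ y_def by (rule assoc_mult_mat_vec[OF Sc Q(1) x, symmetric])
  also have "\<dots> = e \<cdot>\<^sub>v y" by (simp add: assoc_mult_mat_vec[OF Q(1) SQ x] SQx mult_mat_vec[OF Q(1) x] y_def)
  finally have Sy: "S *\<^sub>v y = e \<cdot>\<^sub>v y" .
  have "y \<noteq> 0\<^sub>v d"
  proof
    assume "y = 0\<^sub>v d"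
    hence "e \<cdot>\<^sub>v x = 0\<^sub>v d" using SQx assoc_mult_mat_vec[OF Sc Q(1) x] Sc by (simp add: y_def)
    hence "x = 0\<^sub>v d" using e x by (intro eq_vecI) (auto simp: vec_eq_iff)
    thus False using x0 by contradiction
  qed
  with Sy Sc Q(1) x have "eigenvector S y e" by (simp add: eigenvector_def y_def)
  moreover have "mat_adjoint V *\<^sub>v y = 0\<^sub>v k"
    unfolding y_def assoc_mult_mat_vec[OF mat_adjoint_carrier[OF V] Q(1) x, symmetric] Q(3)
    using x by (intro eq_vecI) auto
  ultimately show ?thesis by blast
qed

definition orthonormal :: "nat \<Rightarrow> complex vec list \<Rightarrow> bool" where
  "orthonormal d vs \<longleftrightarrow> set vs \<subseteq> carrier_vec d \<and>
     (\<forall>i<length vs. \<forall>j<length vs. vs ! i \<bullet>c vs ! j = (if i = j then 1 else 0))"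

lemma mat_adjoint_mat_of_cols_orthonormal:
  assumes "orthonormal d vs"
  shows "mat_adjoint (mat_of_cols d vs) * mat_of_cols d vs = 1\<^sub>m (length vs)"
proof (rule eq_matI)
  fix i j assume "i < dim_row (1\<^sub>m (length vs))" "j < dim_col (1\<^sub>m (length vs))"
  hence ij: "i < length vs" "j < length vs" by auto
  with assms have "vs ! i \<in> carrier_vec d" "vs ! j \<in> carrier_vec d"
    by (auto simp: orthonormal_def)
  hence "(mat_adjoint (mat_of_cols d vs) * mat_of_cols d vs) $$ (i, j) = vs ! j \<bullet>c vs ! i"
    using ij by (simp add: cscalar_prod_sum mult.commute mat_of_cols_def)
  with assms ij show "(mat_adjoint (mat_of_cols d vs) * mat_of_cols d vs) $$ (i, j) = 1\<^sub>m (length vs) $$ (i, j)"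
    by (auto simp: orthonormal_def)
qed auto

lemma orthonormal_append:
  assumes vs: "orthonormal d vs" and y: "y \<in> carrier_vec d" "y \<bullet>c y = 1"
    and orth: "\<And>v. v \<in> set vs \<Longrightarrow> y \<bullet>c v = 0"
  shows "orthonormal d (vs @ [y])"
proof -
  have "v \<bullet>c y = 0" if "v \<in> set vs" for v
    using orth[OF that] vs y that cscalar_prod_commute[of v y] by (auto simp: orthonormal_def)
  with vs y orth show ?thesis
    unfolding orthonormal_def by (auto simp: nth_append less_Suc_eq)
qed

lemma mat_of_cols_eigenvectors:
  fixes S :: "complex mat" and \<mu> :: "nat \<Rightarrow> complex"
  assumes S: "S \<in> carrier_mat d d" and vs: "set vs \<subseteq> carrier_vec d"
    and ev: "\<And>i. i < length vs \<Longrightarrow> S *\<^sub>v vs ! i = \<mu> i \<cdot>\<^sub>v vs ! i"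
  shows "S * mat_of_cols d vs = mat_of_cols d vs * mat_diag (length vs) \<mu>"
proof (rule eq_matI)
  fix a i assume "a < dim_row (mat_of_cols d vs * mat_diag (length vs) \<mu>)"
    "i < dim_col (mat_of_cols d vs * mat_diag (length vs) \<mu>)"
  hence ai: "a < d" "i < length vs" by (auto simp: mat_diag_def)
  have vi: "vs ! i \<in> carrier_vec d" using vs ai by auto
  have "(S * mat_of_cols d vs) $$ (a, i) = (S *\<^sub>v vs ! i) $ a"
    using S ai vi by (simp add: col_mat_of_cols del: row_scalar_prod_col row_scalar_prod)
  also have "\<dots> = (mat_of_cols d vs * mat_diag (length vs) \<mu>) $$ (a, i)"
    using ev ai vi by (simp add: mat_diag_mult_right[of _ d] mat_of_cols_def mult.commute)
  finally show "(S * mat_of_cols d vs) $$ (a, i) = (mat_of_cols d vs * mat_diag (length vs) \<mu>) $$ (a, i)" .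
qed (use S in \<open>auto simp: mat_diag_def\<close>)

lemma unit_multiple_exists:
  fixes v :: "complex vec"
  assumes "v \<noteq> 0\<^sub>v (dim_vec v)"
  shows "\<exists>c. (c \<cdot>\<^sub>v v) \<bullet>c (c \<cdot>\<^sub>v v) = 1"
proof -
  have "0 < v \<bullet>c v" using assms by (simp add: conjugate_square_greater_0_vec[of _ "dim_vec v"])
  hence pos: "0 < norm_sq_vec v" by (simp add: cscalar_prod_self less_complex_def)
  define c where "c = complex_of_real (1 / sqrt (norm_sq_vec v))"
  have "(c \<cdot>\<^sub>v v) \<bullet>c (c \<cdot>\<^sub>v v) = c * cnj c * (v \<bullet>c v)"
    by (simp add: cscalar_prod_sum sum_distrib_left mult_ac)
  also have "\<dots> = 1"
    using pos by (simp add: c_def cscalar_prod_self field_simps flip: of_real_mult)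
  finally show ?thesis by blast
qed

lemma orthogonal_if_mat_adjoint_mat_of_cols_mult_vec_eq_0:
  fixes vs :: "complex vec list"
  assumes vs: "set vs \<subseteq> carrier_vec d" and y: "y \<in> carrier_vec d"
    and orth: "mat_adjoint (mat_of_cols d vs) *\<^sub>v y = 0\<^sub>v (length vs)" and v: "v \<in> set vs"
  shows "y \<bullet>c v = 0"
proof -
  from v obtain i where i: "i < length vs" "v = vs ! i" by (auto simp: in_set_conv_nth)
  have "col (mat_of_cols d vs) i = v" using i vs by (simp add: col_mat_of_cols subset_code(1))
  hence "(mat_adjoint (mat_of_cols d vs) *\<^sub>v y) $ i = y \<bullet>c v"
    using index_mat_adjoint_mult_vec[OF mat_of_cols_carrier(1)[of d vs] y i(1)] by simp
  with orth i(1) show ?thesis by simp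
qed

lemma orthonormal_eigenvectors_exist:
  assumes S: "positive_definite d S"
  shows "k \<le> d \<Longrightarrow> \<exists>vs \<mu>. length vs = k \<and> orthonormal d vs \<and> (\<forall>i<k. S *\<^sub>v vs ! i = \<mu> i \<cdot>\<^sub>v vs ! i)"
proof (induction k)
  case 0
  show ?case by (simp add: orthonormal_def)
next
  case (Suc k)
  then obtain vs \<mu> where vs: "length vs = k" "orthonormal d vs" and ev: "\<forall>i<k. S *\<^sub>v vs ! i = \<mu> i \<cdot>\<^sub>v vs ! i"
    by auto
  have Sc: "S \<in> carrier_mat d d" using S by (simp add: positive_definite_def)
  have vsc: "set vs \<subseteq> carrier_vec d" using vs(2) by (simp add: orthonormal_def)
  define V where "V = mat_of_cols d vs"
  have V: "V \<in> carrier_mat d k" using mat_of_cols_carrier(1)[of d vs] vs(1) by (simp add: V_def)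
  obtain y e where y: "eigenvector S y e" and Vy: "mat_adjoint V *\<^sub>v y = 0\<^sub>v k"
    using eigenvector_orthogonal_to_invariant_subspace[OF S V _ _ _ ] Suc.prems
      mat_adjoint_mat_of_cols_orthonormal[OF vs(2)] mat_of_cols_eigenvectors[OF Sc vsc, of \<mu>] ev vs(1)
    unfolding V_def by (metis Suc_le_eq mat_diag_dim)
  have yc: "y \<in> carrier_vec d" and Sy: "S *\<^sub>v y = e \<cdot>\<^sub>v y"
    using y Sc by (auto simp: eigenvector_def)
  obtain c where c: "(c \<cdot>\<^sub>v y) \<bullet>c (c \<cdot>\<^sub>v y) = 1"
    using y Sc unit_multiple_exists[of y] by (auto simp: eigenvector_def)
  define u where "u = c \<cdot>\<^sub>v y"
  have uc: "u \<in> carrier_vec d" using yc by (simp add: u_def)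
  have Su: "S *\<^sub>v u = e \<cdot>\<^sub>v u"
    using Sc yc Sy by (simp add: u_def mult_mat_vec smult_smult_assoc mult.commute)
  have "u \<bullet>c v = 0" if "v \<in> set vs" for v
    using orthogonal_if_mat_adjoint_mat_of_cols_mult_vec_eq_0[OF vsc yc Vy[unfolded V_def vs(1)[symmetric]] that]
      vsc that yc by (auto simp: u_def smult_scalar_prod_distrib[of _ d])
  hence "orthonormal d (vs @ [u])"
    using orthonormal_append[OF vs(2) uc] c by (simp add: u_def)
  moreover have "\<forall>i<Suc k. S *\<^sub>v (vs @ [u]) ! i = (\<mu>(k := e)) i \<cdot>\<^sub>v (vs @ [u]) ! i"
    using ev Su vs(1) by (auto simp: nth_append less_Suc_eq)
  ultimately show ?case using vs(1) by (intro exI[of _ "vs @ [u]"] exI[of _ "\<mu>(k := e)"]) auto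
qed

lemma positive_definite_spectral_decomposition:
  assumes S: "positive_definite d S"
  shows "\<exists>U f. unitary d U \<and> (\<forall>i<d. 0 < f i) \<and> S = unitary_diag U d f"
proof -
  have Sc: "S \<in> carrier_mat d d" using S by (simp add: positive_definite_def)
  obtain vs \<mu> where vs: "length vs = d" "orthonormal d vs" and ev: "\<forall>i<d. S *\<^sub>v vs ! i = \<mu> i \<cdot>\<^sub>v vs ! i"
    using orthonormal_eigenvectors_exist[OF S, of d] by auto
  have vsc: "set vs \<subseteq> carrier_vec d" using vs(2) by (simp add: orthonormal_def)
  define U where "U = mat_of_cols d vs"
  have Uc: "U \<in> carrier_mat d d" using mat_of_cols_carrier(1)[of d vs] vs(1) by (simp add: U_def)
  have UU: "mat_adjoint U * U = 1\<^sub>m d"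
    using mat_adjoint_mat_of_cols_orthonormal[OF vs(2)] vs(1) by (simp add: U_def)
  hence U: "unitary d U"
    using Uc mat_mult_left_right_inverse[OF mat_adjoint_carrier[OF Uc] Uc] by (simp add: unitary_def)
  define f where "f i = Re (\<mu> i)" for i
  have \<mu>: "0 < f i \<and> \<mu> i = complex_of_real (f i)" if i: "i < d" for i
  proof -
    have vi: "vs ! i \<in> carrier_vec d" and vv: "vs ! i \<bullet>c vs ! i = 1"
      using vs vsc i by (auto simp: orthonormal_def)
    hence "vs ! i \<noteq> 0\<^sub>v d" by auto
    hence "0 < (S *\<^sub>v vs ! i) \<bullet>c vs ! i" using S vi by (simp add: positive_definite_def)
    also have "(S *\<^sub>v vs ! i) \<bullet>c vs ! i = \<mu> i" using ev i vi vv by simp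
    finally show ?thesis by (simp add: f_def less_complex_def complex_eq_iff)
  qed
  have "S * U = U * mat_diag d (\<lambda>i. complex_of_real (f i))"
    using mat_of_cols_eigenvectors[OF Sc vsc, of \<mu>] ev vs(1) \<mu>
    unfolding U_def mat_diag_def by (auto intro!: arg_cong2[where f = "(*)"] cong_mat)
  hence "S * U * mat_adjoint U = unitary_diag U d f" by (simp add: unitary_diag_def)
  hence "S = unitary_diag U d f"
    using U Sc Uc by (simp add: unitary_def assoc_mult_mat[OF Sc Uc mat_adjoint_carrier[OF Uc]])
  thus ?thesis using U \<mu> by blast
qed

lemma positive_definite_inverse_square_root:
  assumes "positive_definite d S"
  defines "G \<equiv> mat_inv d (pd_sqrt d S)"
  shows "G \<in> carrier_mat d d" and "mat_adjoint G = G" and "mat_inv d S = G * G" and "G * S * G = 1\<^sub>m d"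
proof -
  obtain U f where U: "unitary d U" and f: "\<forall>i<d. 0 < f i" and S: "S = unitary_diag U d f"
    using positive_definite_spectral_decomposition[OF assms(1)] by blast
  have G: "G = unitary_diag U d (\<lambda>i. 1 / sqrt (f i))"
    unfolding G_def S using unitary_diag_inverse_square_root(1)[OF U] f by blast
  show "G \<in> carrier_mat d d" and "mat_adjoint G = G" unfolding G using U by simp_all
  show "mat_inv d S = G * G" and "G * S * G = 1\<^sub>m d"
    unfolding G S using unitary_diag_inverse_square_root(2,3)[OF U] f by blast+
qed

section \<open>Parseval g-frames\<close>

lemma mtrace_one_minus_square:
  fixes M :: "complex mat"
  assumes M: "M \<in> carrier_mat r r" and Mh: "mat_adjoint M = M"
  shows "mtrace (mat_adjoint (1\<^sub>m r - M) * (1\<^sub>m r - M)) = of_nat r - mtrace M - (mtrace M - mtrace (M * M))"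
proof -
  have D: "1\<^sub>m r - M \<in> carrier_mat r r" using M by (simp add: minus_carrier_mat)
  have "mat_adjoint (1\<^sub>m r - M) * (1\<^sub>m r - M) = 1\<^sub>m r * (1\<^sub>m r - M) - M * (1\<^sub>m r - M)"
    using Mh by (simp add: mat_adjoint_minus[OF one_carrier_mat M] minus_mult_distrib_mat[OF one_carrier_mat M D])
  also have "\<dots> = (1\<^sub>m r - M) - (M - M * M)"
    using M D by (simp add: mult_minus_distrib_mat[OF M one_carrier_mat M])
  finally have "mat_adjoint (1\<^sub>m r - M) * (1\<^sub>m r - M) = (1\<^sub>m r - M) - (M - M * M)" .
  moreover have "M - M * M \<in> carrier_mat r r" using M by (simp add: minus_carrier_mat)
  ultimately show ?thesis
    using M by (simp add: mtrace_minus[OF D] mtrace_minus[OF M] mtrace_minus[OF one_carrier_mat M])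
qed

lemma parseval_mtrace_decomposition:
  fixes W :: "'i \<Rightarrow> complex mat"
  assumes J: "finite J" and j: "j \<in> J" and W: "\<And>k. k \<in> J \<Longrightarrow> W k \<in> carrier_mat d r"
    and parseval: "mat_sum d d J (\<lambda>k. W k * mat_adjoint (W k)) = 1\<^sub>m d"
  shows "mtrace (mat_adjoint (W j) * W j) =
    mtrace ((mat_adjoint (W j) * W j) * (mat_adjoint (W j) * W j)) +
    (\<Sum>k\<in>J - {j}. mtrace (mat_adjoint (mat_adjoint (W k) * W j) * (mat_adjoint (W k) * W j)))"
proof -
  have Wj: "W j \<in> carrier_mat d r" by (rule W[OF j])
  \<comment> \<open>Sandwich the Parseval identity between \<open>W\<^sub>j\<^sup>*\<close> and \<open>W\<^sub>j\<close>.\<close>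
  have "mtrace (mat_adjoint (W j) * W j) =
    mtrace (mat_adjoint (W j) * mat_sum d d J (\<lambda>k. W k * mat_adjoint (W k)) * W j)"
    using Wj by (simp add: parseval)
  also have "\<dots> = (\<Sum>k\<in>J. mtrace (mat_adjoint (mat_adjoint (W k) * W j) * (mat_adjoint (W k) * W j)))"
    by (rule mtrace_mat_sum_congruence[OF Wj W])
  also have "\<dots> = mtrace ((mat_adjoint (W j) * W j) * (mat_adjoint (W j) * W j)) +
    (\<Sum>k\<in>J - {j}. mtrace (mat_adjoint (mat_adjoint (W k) * W j) * (mat_adjoint (W k) * W j)))"
    using J j Wj by (simp add: sum.remove mat_adjoint_mult[of _ r d _ r])
  finally show ?thesis .
qed

lemma parseval_gframe_mtrace:
  fixes W :: "'i \<Rightarrow> complex mat"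
  assumes J: "finite J" and j: "j \<in> J" and W: "\<And>k. k \<in> J \<Longrightarrow> W k \<in> carrier_mat d r"
    and parseval: "mat_sum d d J (\<lambda>k. W k * mat_adjoint (W k)) = 1\<^sub>m d"
  shows "mtrace (mat_adjoint (W j) * W j) \<le> of_nat r"
    and "mtrace (mat_adjoint (W j) * W j) = of_nat r \<Longrightarrow>
      mat_adjoint (W j) * W j = 1\<^sub>m r \<and> (\<forall>k\<in>J - {j}. mat_adjoint (W k) * W j = 0\<^sub>m r r)"
proof -
  define M where "M = mat_adjoint (W j) * W j"
  define t where "t k = mtrace (mat_adjoint (mat_adjoint (W k) * W j) * (mat_adjoint (W k) * W j))" for k
  define s where "s = (\<Sum>k\<in>J - {j}. t k)"
  have Wj: "W j \<in> carrier_mat d r" by (rule W[OF j])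
  have Mc: "M \<in> carrier_mat r r" and Mh: "mat_adjoint M = M"
    using Wj by (simp_all add: M_def mat_adjoint_mult[of _ r d _ r] mult_carrier_mat[of _ r d])
  have Nc: "mat_adjoint (W k) * W j \<in> carrier_mat r r" if "k \<in> J" for k
    using W[OF that] Wj by (simp add: mult_carrier_mat[of _ r d])
  have t: "0 \<le> t k" if "k \<in> J" for k
    unfolding t_def by (rule mtrace_adjoint_mult_nonneg[OF Nc[OF that]])
  have s: "0 \<le> s" unfolding s_def using t by (auto intro: sum_nonneg)
  have trM: "mtrace M = mtrace (M * M) + s"
    unfolding M_def s_def t_def by (rule parseval_mtrace_decomposition[OF J j W parseval])
  have D: "0 \<le> of_nat r - mtrace M - s"
    using mtrace_adjoint_mult_nonneg[of "1\<^sub>m r - M" r r] mtrace_one_minus_square[OF Mc Mh] trM Mc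
    by (simp add: minus_carrier_mat)
  hence "s + mtrace M \<le> of_nat r" by (simp only: diff_diff_eq diff_ge_0_iff_ge add.commute)
  with add_increasing[OF s order.refl] show "mtrace (mat_adjoint (W j) * W j) \<le> of_nat r"
    unfolding M_def[symmetric] by (rule order_trans)
  assume "mtrace (mat_adjoint (W j) * W j) = of_nat r"
  hence "mtrace M = of_nat r" by (simp add: M_def)
  with D have "s \<le> 0" by simp
  with s have s0: "s = 0" by (rule order.antisym[rotated])
  have "mtrace (M * M) = of_nat r" using trM s0 \<open>mtrace M = of_nat r\<close> by simp
  hence "mtrace (mat_adjoint (1\<^sub>m r - M) * (1\<^sub>m r - M)) = 0"
    unfolding mtrace_one_minus_square[OF Mc Mh] \<open>mtrace M = of_nat r\<close> by simp
  hence "1\<^sub>m r - M = 0\<^sub>m r r" by (rule mtrace_adjoint_mult_eq_0[OF minus_carrier_mat[OF Mc]])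
  hence "M = 1\<^sub>m r" by (rule minus_mat_eq_0_imp_eq[OF one_carrier_mat Mc, symmetric])
  moreover have "mat_adjoint (W k) * W j = 0\<^sub>m r r" if "k \<in> J - {j}" for k
  proof -
    have "t k = 0" using s0 t J that unfolding s_def by (subst (asm) sum_nonneg_eq_0_iff) auto
    thus ?thesis using that by (intro mtrace_adjoint_mult_eq_0[OF Nc]) (auto simp: t_def)
  qed
  ultimately show "mat_adjoint (W j) * W j = 1\<^sub>m r \<and> (\<forall>k\<in>J - {j}. mat_adjoint (W k) * W j = 0\<^sub>m r r)"
    by (simp add: M_def)
qed

lemma gframe_op_eq_mat_sum: "gframe_op d n T = mat_sum d d {1..n} (\<lambda>j. T j * mat_adjoint (T j))"
  unfolding gframe_op_def mat_sum_def ..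

lemma gframe_op_positive_definite:
  assumes "is_gframe d r n T"
  shows "positive_definite d (gframe_op d n T)"
proof -
  from assms have T: "\<And>j. j \<in> {1..n} \<Longrightarrow> T j \<in> carrier_mat d r" unfolding is_gframe_def by blast
  from assms obtain A where A: "0 < A"
    and lower: "\<And>x. x \<in> carrier_vec d \<Longrightarrow> A * norm_sq_vec x \<le> (\<Sum>j=1..n. norm_sq_vec (mat_adjoint (T j) *\<^sub>v x))"
    unfolding is_gframe_def by blast
  have TT: "T j * mat_adjoint (T j) \<in> carrier_mat d d" if "j \<in> {1..n}" for j
    using T[OF that] by (simp add: mult_carrier_mat[of _ d r])
  have "mat_adjoint (gframe_op d n T) = mat_sum d d {1..n} (\<lambda>j. mat_adjoint (T j * mat_adjoint (T j)))"
    unfolding gframe_op_eq_mat_sum by (rule mat_adjoint_mat_sum[OF TT])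
  also have "\<dots> = gframe_op d n T"
    unfolding gframe_op_eq_mat_sum using T by (intro mat_sum_cong) (simp add: mat_adjoint_mult[of _ d r _ d])
  finally have "mat_adjoint (gframe_op d n T) = gframe_op d n T" .
  moreover have "0 < (gframe_op d n T *\<^sub>v x) \<bullet>c x" if x: "x \<in> carrier_vec d" "x \<noteq> 0\<^sub>v d" for x
  proof -
    have "(gframe_op d n T *\<^sub>v x) \<bullet>c x = (\<Sum>j=1..n. (T j * mat_adjoint (T j) *\<^sub>v x) \<bullet>c x)"
      unfolding gframe_op_eq_mat_sum by (rule mat_sum_quadratic_form[OF TT x(1)])
    also have "\<dots> = (\<Sum>j=1..n. (mat_adjoint (T j) *\<^sub>v x) \<bullet>c (mat_adjoint (T j) *\<^sub>v x))"
    proof (rule sum.cong[OF refl])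
      fix j assume "j \<in> {1..n}"
      hence Tj: "T j \<in> carrier_mat d r" by (rule T)
      have y: "mat_adjoint (T j) *\<^sub>v x \<in> carrier_vec r" using mat_adjoint_carrier[OF Tj] x(1) by (rule mult_mat_vec_carrier)
      show "(T j * mat_adjoint (T j) *\<^sub>v x) \<bullet>c x = (mat_adjoint (T j) *\<^sub>v x) \<bullet>c (mat_adjoint (T j) *\<^sub>v x)"
        using Tj x(1) by (simp add: assoc_mult_mat_vec[of _ d r _ d] mat_adjoint_cscalar_prod[OF Tj y x(1)])
    qed
    also have "\<dots> = complex_of_real (\<Sum>j=1..n. norm_sq_vec (mat_adjoint (T j) *\<^sub>v x))"
      by (simp add: cscalar_prod_self)
    finally have "(gframe_op d n T *\<^sub>v x) \<bullet>c x = complex_of_real (\<Sum>j=1..n. norm_sq_vec (mat_adjoint (T j) *\<^sub>v x))" .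
    moreover have "0 < norm_sq_vec x"
      using x conjugate_square_greater_0_vec[OF x(1)] by (simp add: cscalar_prod_self less_complex_def)
    with A lower[OF x(1)] have "0 < (\<Sum>j=1..n. norm_sq_vec (mat_adjoint (T j) *\<^sub>v x))"
      by (meson mult_pos_pos order.strict_trans2)
    ultimately show ?thesis by (simp add: less_complex_def)
  qed
  ultimately show ?thesis unfolding positive_definite_def by (simp add: gframe_op_def)
qed

lemma gframe_canonical_parseval:
  assumes frame: "is_gframe d r n T"
  defines "G \<equiv> mat_inv d (pd_sqrt d (gframe_op d n T))"
  shows "G \<in> carrier_mat d d"
    and "mat_sum d d {1..n} (\<lambda>k. (G * T k) * mat_adjoint (G * T k)) = 1\<^sub>m d"
    and "j \<in> {1..n} \<Longrightarrow>
      mat_adjoint (T j) * mat_inv d (gframe_op d n T) * T j = mat_adjoint (G * T j) * (G * T j)"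
proof -
  have T: "\<And>j. j \<in> {1..n} \<Longrightarrow> T j \<in> carrier_mat d r" using frame unfolding is_gframe_def by blast
  note G = positive_definite_inverse_square_root[OF gframe_op_positive_definite[OF frame], folded G_def]
  show "G \<in> carrier_mat d d" by (fact G(1))
  have "G * gframe_op d n T * G = mat_sum d d {1..n} (\<lambda>k. (G * T k) * mat_adjoint (G * T k))"
    unfolding gframe_op_eq_mat_sum by (rule mat_sum_congruence[OF G(1,2) T])
  with G(4) show "mat_sum d d {1..n} (\<lambda>k. (G * T k) * mat_adjoint (G * T k)) = 1\<^sub>m d" by simp
  assume "j \<in> {1..n}"
  hence Tj: "T j \<in> carrier_mat d r" by (rule T)
  have Tjh: "mat_adjoint (T j) \<in> carrier_mat r d" using Tj by simp
  show "mat_adjoint (T j) * mat_inv d (gframe_op d n T) * T j = mat_adjoint (G * T j) * (G * T j)"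
    using G(2,3) by (simp add: mat_adjoint_mult[OF G(1) Tj] assoc_mult_mat[OF Tjh G(1) mult_carrier_mat[OF G(1) Tj]]
        assoc_mult_mat[OF Tjh mult_carrier_mat[OF G(1) G(1)] Tj] assoc_mult_mat[OF G(1) G(1) Tj])
qed

theorem proposition3p6:
  fixes K :: "complex set" and d r n :: nat and T :: "nat \<Rightarrow> complex mat"
  assumes "field_K K"
    and "\<forall>j\<in>{1..n}. entries_in K (T j)"
    and "is_gframe d r n T"
  shows "(\<forall>j\<in>{1..n}.
            mtrace (mat_adjoint (T j) * mat_inv d (gframe_op d n T) * T j) \<le> of_nat r) \<and>
         (\<forall>j\<in>{1..n}.
            mtrace (mat_adjoint (T j) * mat_inv d (gframe_op d n T) * T j) = of_nat r \<longrightarrow>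
              (\<forall>c < r. col (T j) c \<noteq> 0\<^sub>v d) \<and>
              (\<forall>k\<in>{1..n}. k \<noteq> j \<longrightarrow>
                 orth_sets (mat_range (mat_inv d (pd_sqrt d (gframe_op d n T)) * T k))
                           (mat_range (mat_inv d (pd_sqrt d (gframe_op d n T)) * T j))))"
proof -
  define G where "G = mat_inv d (pd_sqrt d (gframe_op d n T))"
  note G = gframe_canonical_parseval[OF assms(3), folded G_def]
  have T: "\<And>j. j \<in> {1..n} \<Longrightarrow> T j \<in> carrier_mat d r" using assms(3) unfolding is_gframe_def by blast
  have W: "\<And>k. k \<in> {1..n} \<Longrightarrow> G * T k \<in> carrier_mat d r" using G(1) T by (simp add: mult_carrier_mat)
  note parseval = parseval_gframe_mtrace[OF _ _ W G(2)]
  show ?thesis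
    unfolding G_def[symmetric]
  proof (intro conjI ballI impI allI)
    fix j assume j: "j \<in> {1..n}"
    show "mtrace (mat_adjoint (T j) * mat_inv d (gframe_op d n T) * T j) \<le> of_nat r"
      unfolding G(3)[OF j] using parseval(1)[OF _ j] by simp
    assume "mtrace (mat_adjoint (T j) * mat_inv d (gframe_op d n T) * T j) = of_nat r"
    hence iso: "mat_adjoint (G * T j) * (G * T j) = 1\<^sub>m r"
      and orth: "\<forall>k\<in>{1..n} - {j}. mat_adjoint (G * T k) * (G * T j) = 0\<^sub>m r r"
      using parseval(2)[OF _ j] G(3)[OF j] by simp_all
    show "col (T j) c \<noteq> 0\<^sub>v d" if "c < r" for c
      using col_nonzero_if_isometry[OF G(1) T[OF j] iso that] .
    show "orth_sets (mat_range (G * T k)) (mat_range (G * T j))" if "k \<in> {1..n}" "k \<noteq> j" for k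
      using orth_sets_mat_range[OF W[OF that(1)] W[OF j]] orth that by simp
  qed
qed

end
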